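(* For $d\ge3$ and each $s\in\{0,1,2\}$, the maximal number of pairwise disjoint lines in the family $\mathcal{L}^s$ is $\mathfrak{s}(\mathcal{L}^s)=d$. In particular, the maximal number $\mathfrak{s}({\rm F}_d)$ of pairwise disjoint lines on ${\rm F}_d$ satisfies $\mathfrak{s}({\rm F}_d)\le 3d$.
   Context: ${\rm F}_d\subset\mathbb{P}^3(\mathbb{C})$ is the surface $x^d-y^d-z^d+w^d=0$. Fix a primitive $d$-th root of unity $\eta$ and $v\in\mathbb{C}$ with $v^d=-1$. For $k,i\in\{0,\dots,d-1\}$ define $L^0_{k,i}:\{y=\eta^i x,\ w=\eta^k z\}$, $L^1_{k,i}:\{x=\eta^{k+i}z,\ y=\eta^i w\}$, $L^2_{k,i}:\{x=v\eta^i w,\ y=v\eta^{k+i}z\}$, and $\mathcal{L}^s=\{L^s_{k,i}\}_{k,i}$. The lines on ${\rm F}_d$ are exactly the elements of $\mathcal{L}^0\cup\mathcal{L}^1\cup\mathcal{L}^2$. For a set $X$ of lines (or a surface), $\mathfrak{s}(X)$ denotes the maximal number of pairwise disjoint lines in $X$. *)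

theory Defs
  imports "HOL-Analysis.Analysis" "HOL-Library.Extended_Nat"
begin

text \<open>Points of P^3(C) are represented by nonzero vectors (x,y,z,w) in C^4,
  coordinates p$1 = x, p$2 = y, p$3 = z, p$4 = w.  A subset of P^3 is represented
  by the (scaling-closed) set of nonzero vectors representing its points.\<close>

type_synonym pt = "complex ^ 4"

definition Fermat :: "nat \<Rightarrow> pt set" where
  "Fermat d = {p. p \<noteq> 0 \<and> (p$1)^d - (p$2)^d - (p$3)^d + (p$4)^d = 0}"

definition is_line :: "pt set \<Rightarrow> bool" where
  "is_line L \<longleftrightarrow> (\<exists>a b. (\<forall>s t. s *s a + t *s b = 0 \<longrightarrow> s = 0 \<and> t = 0) \<and>
       L = {s *s a + t *s b | s t. s *s a + t *s b \<noteq> 0})"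

definition lines_on :: "pt set \<Rightarrow> pt set set" where
  "lines_on S = {L. is_line L \<and> L \<subseteq> S}"

definition L0 :: "complex \<Rightarrow> nat \<Rightarrow> nat \<Rightarrow> pt set" where
  "L0 \<eta> k i = {p. p \<noteq> 0 \<and> p$2 = \<eta>^i * p$1 \<and> p$4 = \<eta>^k * p$3}"

definition L1 :: "complex \<Rightarrow> nat \<Rightarrow> nat \<Rightarrow> pt set" where
  "L1 \<eta> k i = {p. p \<noteq> 0 \<and> p$1 = \<eta>^(k+i) * p$3 \<and> p$2 = \<eta>^i * p$4}"

definition L2 :: "complex \<Rightarrow> complex \<Rightarrow> nat \<Rightarrow> nat \<Rightarrow> pt set" where
  "L2 \<eta> v k i = {p. p \<noteq> 0 \<and> p$1 = v * \<eta>^i * p$4 \<and> p$2 = v * \<eta>^(k+i) * p$3}"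

definition Lfam :: "nat \<Rightarrow> complex \<Rightarrow> complex \<Rightarrow> nat \<Rightarrow> pt set set" where
  "Lfam d \<eta> v s =
     (if s = 0 then {L0 \<eta> k i | k i. k < d \<and> i < d}
      else if s = 1 then {L1 \<eta> k i | k i. k < d \<and> i < d}
      else {L2 \<eta> v k i | k i. k < d \<and> i < d})"

definition ecard :: "'a set \<Rightarrow> enat" where
  "ecard A = (if finite A then enat (card A) else \<infinity>)"

definition sfrak :: "'a set set \<Rightarrow> enat" where
  "sfrak X = Sup {ecard A | A. A \<subseteq> X \<and> pairwise disjnt A}"

end

theory Submission
  imports Defs
begin

text \<open>
  Restricted to a line spanned by \<open>a\<close> and \<open>b\<close>, the equation \<open>\<Sum>j. c j * x j ^ d = 0\<close> of a
  diagonal surface becomes an identity between \<open>d\<close>-th powers of four linear forms in \<open>(s, t)\<close>.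
  Normalising two independent forms to \<open>u\<close> and \<open>1\<close> and comparing the coefficients of
  \<open>1, u, u\<^sup>2, u\<^sup>d\<^sup>-\<^sup>1, u\<^sup>d\<close> (pairwise distinct because \<open>d \<ge> 3\<close>) shows that the
  coordinates split into two pairs of proportional forms \<open>x j' = l * x j\<close> with
  \<open>c j + c j' * l ^ d = 0\<close>. For the Fermat surface the three ways of pairing the four
  coordinates give exactly the three families of lines, each of the form
  \<open>{x j2 = l * x j1, x j4 = m * x j3 | l, m \<in> R}\<close> with \<open>card R = d\<close>. In such a family the
  \<open>d\<close> points \<open>axis j1 1 + axis j2 l\<close> meet every line, so at most \<open>d\<close> lines are pairwise
  disjoint, while the lines with \<open>l = m\<close> are \<open>d\<close> pairwise disjoint ones. Subadditivity of
  \<open>sfrak\<close> under unions then bounds the lines on the whole surface by \<open>3 * d\<close>.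
\<close>

section \<open>Packing numbers\<close>

lemma ecard_le_sfrak:
  assumes "A \<subseteq> X" "pairwise disjnt A"
  shows "ecard A \<le> sfrak X"
  unfolding sfrak_def using assms by (blast intro: Sup_upper)

lemma ecard_Un_le: "ecard (A \<union> B) \<le> ecard A + ecard B"
  by (simp add: ecard_def card_Un_le)

lemma sfrak_mono: "X \<subseteq> Y \<Longrightarrow> sfrak X \<le> sfrak Y"
  unfolding sfrak_def by (blast intro: Sup_subset_mono)

lemma sfrak_Un_le: "sfrak (X \<union> Y) \<le> sfrak X + sfrak Y"
  unfolding sfrak_def [of "X \<union> Y"]
proof (rule Sup_least, clarify)
  fix A assume A: "A \<subseteq> X \<union> Y" "pairwise disjnt A"
  have "ecard A \<le> ecard (A \<inter> X) + ecard (A \<inter> Y)"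
    using ecard_Un_le [of "A \<inter> X" "A \<inter> Y"] A(1) by (simp add: Int_Un_distrib [symmetric] Int_absorb2)
  also have "\<dots> \<le> sfrak X + sfrak Y"
    using A(2) by (intro add_mono ecard_le_sfrak) (auto intro: pairwise_subset)
  finally show "ecard A \<le> sfrak X + sfrak Y" .
qed

lemma sfrak_le_card_hitting_set:
  assumes "finite P" and hit: "\<forall>Y\<in>X. Y \<inter> P \<noteq> {}"
  shows "sfrak X \<le> enat (card P)"
  unfolding sfrak_def
proof (rule Sup_least, clarify)
  fix A assume A: "A \<subseteq> X" "pairwise disjnt A"
  define f where "f Y = (SOME p. p \<in> Y \<inter> P)" for Y
  have f: "f Y \<in> Y \<inter> P" if "Y \<in> A" for Y
    unfolding f_def some_in_eq using hit A(1) that by blast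
  have "inj_on f A"
  proof (rule inj_onI)
    fix Y Z assume "Y \<in> A" "Z \<in> A" "f Y = f Z"
    then show "Y = Z" using f A(2) by (metis IntE disjnt_iff pairwiseD)
  qed
  moreover have "f ` A \<subseteq> P" using f by blast
  ultimately have "finite A" "card A \<le> card P"
    using \<open>finite P\<close> by (metis finite_imageD finite_subset, simp add: card_inj_on_le)
  then show "ecard A \<le> enat (card P)" by (simp add: ecard_def)
qed

section \<open>Power sums of linear forms\<close>

lemma power_sum_identity_coeffs:
  fixes c1 c2 c3 c4 \<alpha> \<beta> \<gamma> \<delta> :: "'a::real_normed_field"
  assumes id: "\<forall>u. c1 * u^d + c2 + c3 * (\<alpha> * u + \<beta>)^d + c4 * (\<gamma> * u + \<delta>)^d = 0"
    and "d \<ge> 1"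
  shows "c1 + c3 * \<alpha>^d + c4 * \<gamma>^d = 0"
    and "c2 + c3 * \<beta>^d + c4 * \<delta>^d = 0"
    and "\<And>k. 0 < k \<Longrightarrow> k < d \<Longrightarrow> c3 * \<alpha>^k * \<beta>^(d-k) + c4 * \<gamma>^k * \<delta>^(d-k) = 0"
proof -
  define C where "C k = (if k = d then c1 else 0) + (if k = 0 then c2 else 0)
     + of_nat (d choose k) * (c3 * \<alpha>^k * \<beta>^(d-k) + c4 * \<gamma>^k * \<delta>^(d-k))" for k
  have binomial: "(a * u + b)^d = (\<Sum>k\<le>d. of_nat (d choose k) * a^k * b^(d-k) * u^k)" for a b u :: 'a
    unfolding binomial_ring [of "a * u" b d] by (simp add: power_mult_distrib mult_ac)
  have "(\<Sum>k\<le>d. C k * u^k) = c1 * u^d + c2 + c3 * (\<alpha> * u + \<beta>)^d + c4 * (\<gamma> * u + \<delta>)^d" for u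
    unfolding C_def binomial
    by (simp add: sum.distrib sum_distrib_left algebra_simps if_distrib [of "times _"] cong: if_cong)
  then have C: "C k = 0" if "k \<le> d" for k
    using id polyfun_eq_0 [of C d] that by simp
  show "c1 + c3 * \<alpha>^d + c4 * \<gamma>^d = 0" using C [of d] \<open>d \<ge> 1\<close> by (simp add: C_def add.assoc)
  show "c2 + c3 * \<beta>^d + c4 * \<delta>^d = 0" using C [of 0] \<open>d \<ge> 1\<close> by (simp add: C_def add.assoc)
  fix k assume "0 < k" "k < d"
  then show "c3 * \<alpha>^k * \<beta>^(d-k) + c4 * \<gamma>^k * \<delta>^(d-k) = 0" using C [of k] by (simp add: C_def add.assoc)
qed

lemma generic_power_sum_coeffs_imp_leading_eq_0:
  fixes c1 c3 c4 \<alpha> \<beta> \<gamma> \<delta> :: "'a::field"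
  assumes top: "c1 + c3 * \<alpha>^d + c4 * \<gamma>^d = 0"
    and coeff1: "c3 * \<alpha> * \<beta>^(d-1) + c4 * \<gamma> * \<delta>^(d-1) = 0"
    and coeff2: "c3 * \<alpha>^2 * \<beta>^(d-2) + c4 * \<gamma>^2 * \<delta>^(d-2) = 0"
    and "d \<ge> 3" "c3 \<noteq> 0" "c4 \<noteq> 0" "\<alpha> \<noteq> 0" "\<beta> \<noteq> 0"
  shows "c1 = 0"
proof -
  obtain e where d: "d = Suc (Suc (Suc e))" using \<open>d \<ge> 3\<close> by (intro that [of "d - 3"]) simp
  have "\<gamma> \<noteq> 0" "\<delta> \<noteq> 0" using coeff1 assms(5-8) by (auto simp: d)
  txt \<open>Eliminating between the two coefficients shows that \<open>(\<gamma>, \<delta>)\<close> is proportional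
    to \<open>(\<alpha>, \<beta>)\<close>.\<close>
  have "c4 * \<gamma> * \<delta>^(d-2) * (\<alpha> * \<delta> - \<beta> * \<gamma>) =
      \<alpha> * (c3 * \<alpha> * \<beta>^(d-1) + c4 * \<gamma> * \<delta>^(d-1)) - \<beta> * (c3 * \<alpha>^2 * \<beta>^(d-2) + c4 * \<gamma>^2 * \<delta>^(d-2))"
    by (simp add: d algebra_simps power2_eq_square)
  then have "\<alpha> * \<delta> = \<beta> * \<gamma>" using coeff1 coeff2 \<open>c4 \<noteq> 0\<close> \<open>\<gamma> \<noteq> 0\<close> \<open>\<delta> \<noteq> 0\<close> by simp
  define l where "l = \<gamma> / \<alpha>"
  have \<gamma>: "\<gamma> = l * \<alpha>" and \<delta>: "\<delta> = l * \<beta>"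
    using \<open>\<alpha> \<noteq> 0\<close> \<open>\<alpha> * \<delta> = \<beta> * \<gamma>\<close> by (auto simp: l_def field_simps)
  have "(c3 + c4 * l^d) * (\<alpha> * \<beta>^(d-1)) = 0"
    using coeff1 unfolding \<gamma> \<delta> by (simp add: d algebra_simps)
  then have "c3 + c4 * l^d = 0" using \<open>\<alpha> \<noteq> 0\<close> \<open>\<beta> \<noteq> 0\<close> by simp
  moreover have "c1 = (c1 + c3 * \<alpha>^d + c4 * \<gamma>^d) - (c3 + c4 * l^d) * \<alpha>^d"
    unfolding \<gamma> by (simp add: algebra_simps)
  ultimately show "c1 = 0" using top by simp
qed

lemma affine_power_sum_identity_cases:
  fixes c1 c2 c3 c4 \<alpha> \<beta> \<gamma> \<delta> :: "'a::real_normed_field"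
  assumes id: "\<forall>u. c1 * u^d + c2 + c3 * (\<alpha> * u + \<beta>)^d + c4 * (\<gamma> * u + \<delta>)^d = 0"
    and "d \<ge> 3" and c: "c1 \<noteq> 0" "c2 \<noteq> 0" "c3 \<noteq> 0" "c4 \<noteq> 0"
  shows "\<alpha> = 0 \<and> \<delta> = 0 \<and> c1 + c4 * \<gamma>^d = 0 \<and> c2 + c3 * \<beta>^d = 0 \<or>
         \<beta> = 0 \<and> \<gamma> = 0 \<and> c1 + c3 * \<alpha>^d = 0 \<and> c2 + c4 * \<delta>^d = 0"
proof -
  obtain e where d: "d = Suc (Suc (Suc e))" using \<open>d \<ge> 3\<close> by (intro that [of "d - 3"]) simp
  have "d \<ge> 1" using \<open>d \<ge> 3\<close> by simp
  note coeffs = power_sum_identity_coeffs [OF id this]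
  note top = coeffs(1) and bot = coeffs(2)
  have coeff1: "c3 * \<alpha> * \<beta>^(d-1) + c4 * \<gamma> * \<delta>^(d-1) = 0"
    using coeffs(3) [of 1] by (simp add: d)
  have coeff2: "c3 * \<alpha>^2 * \<beta>^(d-2) + c4 * \<gamma>^2 * \<delta>^(d-2) = 0"
    using coeffs(3) [of 2] by (simp add: d)
  have coeff_top1: "c3 * \<alpha>^(d-1) * \<beta> + c4 * \<gamma>^(d-1) * \<delta> = 0"
    using coeffs(3) [of "Suc (Suc e)"] by (simp add: d)
  consider "\<alpha> = 0" | "\<beta> = 0" | "\<alpha> \<noteq> 0" "\<beta> \<noteq> 0" by blast
  then show ?thesis
  proof cases
    case 1
    then have "\<gamma> \<noteq> 0" using top c by (auto simp: d)
    then have "\<delta> = 0" using coeff1 1 c by (auto simp: d)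
    then show ?thesis using 1 top bot by (simp add: d)
  next
    case 2
    then have "\<delta> \<noteq> 0" using bot c by (auto simp: d)
    then have "\<gamma> = 0" using coeff_top1 2 c by (auto simp: d)
    then show ?thesis using 2 top bot by (simp add: d)
  next
    case 3
    then have "c1 = 0"
      using generic_power_sum_coeffs_imp_leading_eq_0 [OF top coeff1 coeff2] \<open>d \<ge> 3\<close> c by blast
    with c show ?thesis by simp
  qed
qed

lemma solve_2x2:
  fixes p q r s x y :: "'a::field"
  assumes "p * s - q * r \<noteq> 0"
  obtains u v where "p * u + q * v = x" "r * u + s * v = y"
proof
  let ?D = "p * s - q * r"
  have "p * (x * s - q * y) + q * (p * y - r * x) = x * ?D"
    and "r * (x * s - q * y) + s * (p * y - r * x) = y * ?D"
    by (simp_all add: algebra_simps)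
  then show "p * ((x * s - q * y) / ?D) + q * ((p * y - r * x) / ?D) = x"
    and "r * ((x * s - q * y) / ?D) + s * ((p * y - r * x) / ?D) = y"
    using assms by (simp_all add: add_divide_distrib [symmetric])
qed

lemma power_sum_of_linear_forms_pairs:
  fixes c1 c2 c3 c4 a1 a2 a3 a4 b1 b2 b3 b4 :: "'a::real_normed_field"
  assumes id: "\<forall>s t. c1 * (a1 * s + b1 * t)^d + c2 * (a2 * s + b2 * t)^d
                    + c3 * (a3 * s + b3 * t)^d + c4 * (a4 * s + b4 * t)^d = 0"
    and "d \<ge> 3" and c: "c1 \<noteq> 0" "c2 \<noteq> 0" "c3 \<noteq> 0" "c4 \<noteq> 0"
    and indep: "a1 * b2 - a2 * b1 \<noteq> 0"
  shows "(\<exists>\<beta> \<gamma>. a3 = \<beta> * a2 \<and> b3 = \<beta> * b2 \<and> a4 = \<gamma> * a1 \<and> b4 = \<gamma> * b1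
                \<and> c2 + c3 * \<beta>^d = 0 \<and> c1 + c4 * \<gamma>^d = 0) \<or>
         (\<exists>\<alpha> \<delta>. a3 = \<alpha> * a1 \<and> b3 = \<alpha> * b1 \<and> a4 = \<delta> * a2 \<and> b4 = \<delta> * b2
                \<and> c1 + c3 * \<alpha>^d = 0 \<and> c2 + c4 * \<delta>^d = 0)"
proof -
  obtain \<alpha> \<beta> where 3: "a1 * \<alpha> + a2 * \<beta> = a3" "b1 * \<alpha> + b2 * \<beta> = b3"
    using indep by (rule solve_2x2)
  obtain \<gamma> \<delta> where 4: "a1 * \<gamma> + a2 * \<delta> = a4" "b1 * \<gamma> + b2 * \<delta> = b4"
    using indep by (rule solve_2x2)
  have "c1 * u^d + c2 + c3 * (\<alpha> * u + \<beta>)^d + c4 * (\<gamma> * u + \<delta>)^d = 0" for u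
  proof -
    have "a1 * b2 - b1 * a2 \<noteq> 0" using indep by (simp add: mult.commute)
    then obtain s t where st: "a1 * s + b1 * t = u" "a2 * s + b2 * t = 1"
      by (rule solve_2x2)
    have "a3 * s + b3 * t = \<alpha> * (a1 * s + b1 * t) + \<beta> * (a2 * s + b2 * t)"
      and "a4 * s + b4 * t = \<gamma> * (a1 * s + b1 * t) + \<delta> * (a2 * s + b2 * t)"
      unfolding 3 [symmetric] 4 [symmetric] by (simp_all add: algebra_simps)
    then show ?thesis using id [rule_format, of s t] unfolding st by simp
  qed
  then have "\<alpha> = 0 \<and> \<delta> = 0 \<and> c1 + c4 * \<gamma>^d = 0 \<and> c2 + c3 * \<beta>^d = 0 \<or>
             \<beta> = 0 \<and> \<gamma> = 0 \<and> c1 + c3 * \<alpha>^d = 0 \<and> c2 + c4 * \<delta>^d = 0"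
    using affine_power_sum_identity_cases \<open>d \<ge> 3\<close> c by blast
  then show ?thesis
  proof (elim disjE conjE)
    assume "\<alpha> = 0" "\<delta> = 0" "c1 + c4 * \<gamma>^d = 0" "c2 + c3 * \<beta>^d = 0"
    then show ?thesis using 3 4 by (intro disjI1 exI [of _ \<beta>] exI [of _ \<gamma>]) (auto simp: mult.commute)
  next
    assume "\<beta> = 0" "\<gamma> = 0" "c1 + c3 * \<alpha>^d = 0" "c2 + c4 * \<delta>^d = 0"
    then show ?thesis using 3 4 by (intro disjI2 exI [of _ \<alpha>] exI [of _ \<delta>]) (auto simp: mult.commute)
  qed
qed

definition coord_line :: "4 \<Rightarrow> 4 \<Rightarrow> 4 \<Rightarrow> 4 \<Rightarrow> complex \<Rightarrow> complex \<Rightarrow> pt set" where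
  "coord_line j1 j2 j3 j4 l m = {p. p \<noteq> 0 \<and> p$j2 = l * p$j1 \<and> p$j4 = m * p$j3}"

lemma UNIV_eq_distinct_4:
  assumes "distinct [j1, j2, j3, j4 :: 4]"
  shows "UNIV = {j1, j2, j3, j4}"
proof -
  have "card (set [j1, j2, j3, j4]) = card (UNIV :: 4 set)"
    using distinct_card [OF assms] by simp
  then show ?thesis by (metis card_subset_eq finite subset_UNIV list.set)
qed

lemma vec_eq_0_iff_distinct_4:
  fixes p :: pt
  assumes "distinct [j1, j2, j3, j4]"
  shows "p = 0 \<longleftrightarrow> p$j1 = 0 \<and> p$j2 = 0 \<and> p$j3 = 0 \<and> p$j4 = 0"
  using UNIV_eq_distinct_4 [OF assms] by (auto simp: vec_eq_iff)

lemma coord_line_swap: "coord_line j1 j2 j3 j4 l m = coord_line j3 j4 j1 j2 m l"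
  unfolding coord_line_def by blast

lemma coord_line_flip:
  assumes "l \<noteq> 0"
  shows "coord_line j1 j2 j3 j4 l m = coord_line j2 j1 j3 j4 (1 / l) m"
  unfolding coord_line_def using assms by (auto simp: field_simps)

lemma axis_add_axis_in_coord_line:
  assumes "distinct [j1, j2, j3, j4]"
  shows "axis j1 1 + axis j2 l \<in> coord_line j1 j2 j3 j4 l m"
proof -
  have "(axis j1 1 + axis j2 l :: pt) $ j1 = 1" using assms by (simp add: axis_def)
  then have "axis j1 1 + axis j2 l \<noteq> (0 :: pt)" by (metis one_neq_zero zero_index)
  then show ?thesis using assms by (auto simp: coord_line_def axis_def)
qed

lemma disjnt_coord_line:
  assumes "distinct [j1, j2, j3, j4]" "l \<noteq> l'" "m \<noteq> m'"
  shows "disjnt (coord_line j1 j2 j3 j4 l m) (coord_line j1 j2 j3 j4 l' m')"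
proof -
  have "p = 0" if "p$j2 = l * p$j1" "p$j2 = l' * p$j1" "p$j4 = m * p$j3" "p$j4 = m' * p$j3" for p :: pt
    using that assms by (subst vec_eq_0_iff_distinct_4 [OF assms(1)]) (metis mult_cancel_right mult_zero_left)
  then show ?thesis unfolding coord_line_def disjnt_def by blast
qed

definition coord_lines :: "4 \<Rightarrow> 4 \<Rightarrow> 4 \<Rightarrow> 4 \<Rightarrow> complex set \<Rightarrow> pt set set" where
  "coord_lines j1 j2 j3 j4 R = {coord_line j1 j2 j3 j4 l m | l m. l \<in> R \<and> m \<in> R}"

lemma sfrak_coord_lines:
  assumes "distinct [j1, j2, j3, j4]" "finite R"
  shows "sfrak (coord_lines j1 j2 j3 j4 R) = enat (card R)"
    (is "sfrak ?X = _")
proof (rule antisym)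
  show "sfrak ?X \<le> enat (card R)"
  proof -
    have "sfrak ?X \<le> enat (card ((\<lambda>l. axis j1 1 + axis j2 l) ` R))"
      using axis_add_axis_in_coord_line [OF assms(1)]
      by (intro sfrak_le_card_hitting_set) (auto simp: coord_lines_def assms(2))
    also have "\<dots> \<le> enat (card R)" using card_image_le [OF assms(2)] by simp
    finally show ?thesis .
  qed
  define line where "line l = coord_line j1 j2 j3 j4 l l" for l
  have disj: "disjnt (line l) (line l')" if "l \<noteq> l'" for l l'
    unfolding line_def using assms(1) that that by (rule disjnt_coord_line)
  have "inj_on line R"
  proof (rule inj_onI)
    fix l l' assume "line l = line l'"
    then show "l = l'" using disj axis_add_axis_in_coord_line [OF assms(1)]
      unfolding line_def disjnt_def by blast
  qed
  then have "enat (card R) = ecard (line ` R)" using assms(2) by (simp add: ecard_def card_image)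
  also have "\<dots> \<le> sfrak ?X"
  proof (rule ecard_le_sfrak)
    show "line ` R \<subseteq> ?X" unfolding line_def coord_lines_def by blast
    show "pairwise disjnt (line ` R)" using disj by (metis pairwise_imageI)
  qed
  finally show "enat (card R) \<le> sfrak ?X" .
qed

section \<open>Lines on diagonal surfaces\<close>

lemma span_eq_coord_line:
  fixes a b :: pt
  assumes js: "distinct [j1, j2, j3, j4]" and minor: "a$j1 * b$j3 - a$j3 * b$j1 \<noteq> 0"
    and "a$j2 = l * a$j1" "b$j2 = l * b$j1" "a$j4 = m * a$j3" "b$j4 = m * b$j3"
  shows "{s *s a + t *s b | s t. s *s a + t *s b \<noteq> 0} = coord_line j1 j2 j3 j4 l m"
proof (intro set_eqI iffI)
  fix p assume "p \<in> {s *s a + t *s b | s t. s *s a + t *s b \<noteq> 0}"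
  then show "p \<in> coord_line j1 j2 j3 j4 l m" using assms by (auto simp: coord_line_def algebra_simps)
next
  fix p assume p: "p \<in> coord_line j1 j2 j3 j4 l m"
  have "a$j1 * b$j3 - b$j1 * a$j3 \<noteq> 0" using minor by (simp add: mult.commute)
  then obtain s t where st: "a$j1 * s + b$j1 * t = p$j1" "a$j3 * s + b$j3 * t = p$j3"
    by (rule solve_2x2)
  define q where "q = s *s a + t *s b"
  have "q$j1 = p$j1" "q$j3 = p$j3" using st by (simp_all add: q_def mult.commute)
  moreover have "q$j2 = l * q$j1" "q$j4 = m * q$j3" using assms(3-6) by (simp_all add: q_def algebra_simps)
  ultimately have "q - p = 0" using p by (subst vec_eq_0_iff_distinct_4 [OF js]) (simp add: coord_line_def)
  then show "p \<in> {s *s a + t *s b | s t. s *s a + t *s b \<noteq> 0}" using p by (auto simp: q_def coord_line_def)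
qed

lemma independent_imp_nonzero_minor:
  fixes a b :: "'a::field ^ 'n"
  assumes indep: "\<forall>s t. s *s a + t *s b = 0 \<longrightarrow> s = 0 \<and> t = 0"
  obtains i j where "a$i * b$j - a$j * b$i \<noteq> 0"
proof -
  obtain i where "a$i \<noteq> 0" using indep [rule_format, of 1 0] by (auto simp: vec_eq_iff)
  moreover have "b$i *s a + (- a$i) *s b \<noteq> 0" using indep [rule_format, of "b$i" "- a$i"] calculation by auto
  then obtain j where "b$i * a$j - a$i * b$j \<noteq> 0" by (auto simp: vec_eq_iff)
  ultimately show ?thesis using that [of j i] by (simp add: mult.commute)
qed

lemma extend_distinct_4:
  assumes "i \<noteq> (j :: 4)"
  obtains k l where "distinct [i, j, k, l]"
proof -
  have "card (UNIV - {i, j}) = 2" using assms by (simp add: card_Diff_subset)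
  then obtain k l where "UNIV - {i, j} = {k, l}" "k \<noteq> l" by (auto simp: card_2_iff)
  then show ?thesis using that [of k l] assms by auto
qed

lemma sum_UNIV_distinct_4:
  assumes "distinct [j1, j2, j3, j4 :: 4]"
  shows "(\<Sum>j\<in>UNIV. f j) = f j1 + f j2 + f j3 + f j4"
  using assms by (simp add: UNIV_eq_distinct_4 [OF assms] add.assoc)

lemma power_sum_vanishes_on_span:
  fixes a b :: "'a::comm_ring_1 ^ 'n"
  assumes "d > 0" and "\<forall>p \<in> {s *s a + t *s b | s t. s *s a + t *s b \<noteq> 0}. (\<Sum>j\<in>UNIV. c j * (p$j)^d) = 0"
  shows "(\<Sum>j\<in>UNIV. c j * (a$j * s + b$j * t)^d) = 0"
proof (cases "s *s a + t *s b = 0")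
  case True
  then have "a$j * s + b$j * t = 0" for j by (simp add: vec_eq_iff mult.commute)
  then show ?thesis using \<open>d > 0\<close> by (simp add: power_0_left)
next
  case False
  then have "(\<Sum>j\<in>UNIV. c j * ((s *s a + t *s b)$j)^d) = 0" using assms(2) by blast
  then show ?thesis by (simp add: mult.commute)
qed

text \<open>On such a line the terms \<open>c j1 * x j1 ^ d + c j2 * x j2 ^ d\<close> and
  \<open>c j3 * x j3 ^ d + c j4 * x j4 ^ d\<close> of the diagonal form vanish separately.\<close>

definition paired_line :: "(4 \<Rightarrow> complex) \<Rightarrow> nat \<Rightarrow> 4 \<Rightarrow> 4 \<Rightarrow> 4 \<Rightarrow> 4 \<Rightarrow> pt set \<Rightarrow> bool" where
  "paired_line c d j1 j2 j3 j4 L \<longleftrightarrow>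
     (\<exists>l m. L = coord_line j1 j2 j3 j4 l m \<and> c j1 + c j2 * l^d = 0 \<and> c j3 + c j4 * m^d = 0)"

lemma line_on_diagonal_surface_paired:
  fixes c :: "4 \<Rightarrow> complex"
  assumes "d \<ge> 3" and c: "\<forall>j. c j \<noteq> 0" and "is_line L"
    and on_surface: "\<forall>p\<in>L. (\<Sum>j\<in>UNIV. c j * (p$j)^d) = 0"
  obtains j1 j2 j3 j4 where "distinct [j1, j2, j3, j4]" "paired_line c d j1 j2 j3 j4 L"
proof -
  obtain a b where indep: "\<forall>s t. s *s a + t *s b = 0 \<longrightarrow> s = 0 \<and> t = 0"
    and L: "L = {s *s a + t *s b | s t. s *s a + t *s b \<noteq> 0}"
    using \<open>is_line L\<close> unfolding is_line_def by blast
  obtain j1 j2 where minor: "a$j1 * b$j2 - a$j2 * b$j1 \<noteq> 0"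
    using independent_imp_nonzero_minor [OF indep] .
  then have "j1 \<noteq> j2" by auto
  then obtain j3 j4 where js: "distinct [j1, j2, j3, j4]" by (rule extend_distinct_4)
  have "(\<Sum>j\<in>UNIV. c j * (a$j * s + b$j * t)^d) = 0" for s t
    using power_sum_vanishes_on_span [OF _ on_surface [unfolded L]] \<open>d \<ge> 3\<close> by simp
  then have "\<forall>s t. c j1 * (a$j1 * s + b$j1 * t)^d + c j2 * (a$j2 * s + b$j2 * t)^d
                + c j3 * (a$j3 * s + b$j3 * t)^d + c j4 * (a$j4 * s + b$j4 * t)^d = 0"
    by (simp add: sum_UNIV_distinct_4 [OF js])
  from power_sum_of_linear_forms_pairs [OF this \<open>d \<ge> 3\<close> c [rule_format] c [rule_format]
         c [rule_format] c [rule_format] minor]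
  show ?thesis
  proof (elim disjE exE conjE)
    fix \<beta> \<gamma> assume "a$j3 = \<beta> * a$j2" "b$j3 = \<beta> * b$j2" "a$j4 = \<gamma> * a$j1" "b$j4 = \<gamma> * b$j1"
      and "c j2 + c j3 * \<beta>^d = 0" "c j1 + c j4 * \<gamma>^d = 0"
    moreover have "distinct [j2, j3, j1, j4]" "a$j2 * b$j1 - a$j1 * b$j2 \<noteq> 0"
      using js minor by (auto simp: algebra_simps)
    ultimately have "paired_line c d j2 j3 j1 j4 L"
      unfolding paired_line_def L using span_eq_coord_line by blast
    with \<open>distinct [j2, j3, j1, j4]\<close> show ?thesis by (rule that)
  next
    fix \<alpha> \<delta> assume "a$j3 = \<alpha> * a$j1" "b$j3 = \<alpha> * b$j1" "a$j4 = \<delta> * a$j2" "b$j4 = \<delta> * b$j2"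
      and "c j1 + c j3 * \<alpha>^d = 0" "c j2 + c j4 * \<delta>^d = 0"
    moreover have "distinct [j1, j3, j2, j4]" using js by auto
    ultimately have "paired_line c d j1 j3 j2 j4 L"
      unfolding paired_line_def L using span_eq_coord_line minor by blast
    with \<open>distinct [j1, j3, j2, j4]\<close> show ?thesis by (rule that)
  qed
qed

lemma paired_line_swap:
  "paired_line c d j1 j2 j3 j4 L \<Longrightarrow> paired_line c d j3 j4 j1 j2 L"
  unfolding paired_line_def by (metis coord_line_swap)

lemma paired_line_flip:
  assumes "d > 0" "c j1 \<noteq> 0" "paired_line c d j1 j2 j3 j4 L"
  shows "paired_line c d j2 j1 j3 j4 L"
proof -
  obtain l m where L: "L = coord_line j1 j2 j3 j4 l m"
    and l: "c j1 + c j2 * l^d = 0" and m: "c j3 + c j4 * m^d = 0"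
    using assms(3) unfolding paired_line_def by blast
  have "l \<noteq> 0" using l assms(1,2) by (auto simp: power_0_left)
  have "c j2 + c j1 * (1 / l)^d = (c j1 + c j2 * l^d) / l^d"
    using \<open>l \<noteq> 0\<close> by (simp add: field_simps)
  then have "c j2 + c j1 * (1 / l)^d = 0" using l by simp
  then show ?thesis
    unfolding paired_line_def L coord_line_flip [OF \<open>l \<noteq> 0\<close>] using m by blast
qed

lemma paired_line_canonical:
  assumes "d > 0" and c: "\<forall>j. c j \<noteq> 0" and js: "distinct [j1, j2, j3, j4]"
    and "paired_line c d j1 j2 j3 j4 L"
  shows "paired_line c d 1 2 3 4 L \<or> paired_line c d 3 1 4 2 L \<or> paired_line c d 4 1 3 2 L"
proof -
  have flip: "paired_line c d k2 k1 k3 k4 L" if "paired_line c d k1 k2 k3 k4 L" for k1 k2 k3 k4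
    using paired_line_flip \<open>d > 0\<close> c that by blast
  note swap = paired_line_swap [of c d _ _ _ _ L]
  txt \<open>Swaps and flips generate a group of order 8 acting on the 24 orderings of the coordinates
    with three orbits, one for each way of splitting them into two pairs.\<close>
  show ?thesis
    using exhaust_4 [of j1] exhaust_4 [of j2] exhaust_4 [of j3] exhaust_4 [of j4] js assms(4)
    by (elim disjE) (simp_all, (blast intro: flip swap)+)
qed

section \<open>The three families of lines on the Fermat surface\<close>

lemma roots_unity_eq_powers:
  fixes \<eta> :: complex
  assumes "d > 0" "\<eta>^d = 1" and primitive: "\<forall>m. 0 < m \<and> m < d \<longrightarrow> \<eta>^m \<noteq> 1"
  shows "{z. z^d = 1} = (\<lambda>i. \<eta>^i) ` {..<d}"
proof -
  have "\<eta> \<noteq> 0" using assms(1,2) by (auto simp: power_0_left)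
  have "\<eta>^i \<noteq> \<eta>^j" if "i < j" "j < d" for i j
  proof
    assume "\<eta>^i = \<eta>^j"
    then have "\<eta>^(j - i) = 1" using \<open>\<eta> \<noteq> 0\<close> that by (simp add: power_diff)
    with primitive that show False by auto
  qed
  then have "inj_on (\<lambda>i. \<eta>^i) {..<d}" by (metis inj_onI lessThan_iff linorder_neqE_nat)
  then have "card ((\<lambda>i. \<eta>^i) ` {..<d}) = card {z :: complex. z^d = 1}"
    using card_roots_unity_eq [OF \<open>d > 0\<close>] by (simp add: card_image)
  moreover have "(\<lambda>i. \<eta>^i) ` {..<d} \<subseteq> {z. z^d = 1}"
    using \<open>\<eta>^d = 1\<close> by (auto simp flip: power_mult simp: mult.commute [of _ d] power_mult)
  moreover have "finite {z :: complex. z^d = 1}" using finite_roots_unity [of d] \<open>d > 0\<close> by simp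
  ultimately show ?thesis by (metis card_subset_eq)
qed

lemma roots_minus_one_eq:
  fixes v :: complex
  assumes "v^d = -1"
  shows "{z. z^d = -1} = (\<lambda>w. v * w) ` {w. w^d = 1}"
proof (intro set_eqI iffI)
  have "v \<noteq> 0" using assms by (cases d) auto
  fix z :: complex assume "z \<in> {z. z^d = -1}"
  then have "(z / v)^d = 1" using assms by (simp add: power_divide)
  moreover have "z = v * (z / v)" using \<open>v \<noteq> 0\<close> by simp
  ultimately show "z \<in> (\<lambda>w. v * w) ` {w. w^d = 1}" by blast
next
  fix z :: complex assume "z \<in> (\<lambda>w. v * w) ` {w. w^d = 1}"
  then show "z \<in> {z. z^d = -1}" using assms by (auto simp: power_mult_distrib)
qed

lemma finite_card_roots_minus_one:
  fixes v :: complex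
  assumes "v^d = -1"
  shows "finite {z :: complex. z^d = -1}" "card {z :: complex. z^d = -1} = d"
proof -
  have "v \<noteq> 0" "d > 0" using assms by (cases d, auto)+
  then show "finite {z :: complex. z^d = -1}" "card {z :: complex. z^d = -1} = d"
    unfolding roots_minus_one_eq [OF assms]
    using finite_roots_unity [where 'a = complex] card_roots_unity_eq [of d]
    by (simp_all add: card_image inj_on_def)
qed

lemma roots_unity_pair_powers:
  fixes \<eta> l m :: complex
  assumes "d > 0" "\<eta>^d = 1" "\<forall>m. 0 < m \<and> m < d \<longrightarrow> \<eta>^m \<noteq> 1" "l^d = 1" "m^d = 1"
  obtains k i where "k < d" "i < d" "l = \<eta>^(k + i)" "m = \<eta>^i"
proof -
  note roots = roots_unity_eq_powers [OF assms(1-3)]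
  have "m \<noteq> 0" using assms(1,5) by (auto simp: power_0_left)
  have "(l / m)^d = 1" using assms(4,5) by (simp add: power_divide)
  then obtain k i where "k < d" "l / m = \<eta>^k" "i < d" "m = \<eta>^i"
    using assms(5) roots by (auto simp: set_eq_iff image_iff)
  moreover have "l = (l / m) * m" using \<open>m \<noteq> 0\<close> by simp
  ultimately show ?thesis using that by (simp add: power_add)
qed

lemma Lfam_0_eq:
  assumes "d > 0" "\<eta>^d = 1" "\<forall>m. 0 < m \<and> m < d \<longrightarrow> \<eta>^m \<noteq> 1"
  shows "Lfam d \<eta> v 0 = coord_lines 1 2 3 4 {z. z^d = 1}"
proof -
  have "L0 \<eta> k i = coord_line 1 2 3 4 (\<eta>^i) (\<eta>^k)" for k i
    by (simp add: L0_def coord_line_def)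
  then show ?thesis
    unfolding Lfam_def coord_lines_def roots_unity_eq_powers [OF assms] by auto
qed

lemma Lfam_1_eq:
  assumes "d > 0" "\<eta>^d = 1" "\<forall>m. 0 < m \<and> m < d \<longrightarrow> \<eta>^m \<noteq> 1"
  shows "Lfam d \<eta> v 1 = coord_lines 3 1 4 2 {z. z^d = 1}"
proof -
  have L1: "L1 \<eta> k i = coord_line 3 1 4 2 (\<eta>^(k + i)) (\<eta>^i)" for k i
    by (simp add: L1_def coord_line_def)
  have "(\<eta>^n)^d = 1" for n using assms(2) by (metis mult.commute power_mult power_one)
  moreover have "\<exists>k i. coord_line 3 1 4 2 l m = L1 \<eta> k i \<and> k < d \<and> i < d" if "l^d = 1" "m^d = 1" for l m
    using roots_unity_pair_powers [OF assms that] unfolding L1 by metis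
  ultimately show ?thesis unfolding Lfam_def coord_lines_def by (auto simp: L1)
qed

lemma Lfam_2_eq:
  assumes "d > 0" "\<eta>^d = 1" "\<forall>m. 0 < m \<and> m < d \<longrightarrow> \<eta>^m \<noteq> 1" and v: "v^d = -1"
  shows "Lfam d \<eta> v 2 = coord_lines 4 1 3 2 {z. z^d = -1}"
proof -
  have L2: "L2 \<eta> v k i = coord_line 4 1 3 2 (v * \<eta>^i) (v * \<eta>^(k + i))" for k i
    by (simp add: L2_def coord_line_def mult.assoc)
  have "(v * \<eta>^n)^d = -1" for n using assms(2) v by (metis mult.commute power_mult power_one power_mult_distrib mult_1)
  moreover have "\<exists>k i. coord_line 4 1 3 2 l m = L2 \<eta> v k i \<and> k < d \<and> i < d"
    if lm: "l^d = -1" "m^d = -1" for l m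
  proof -
    obtain w w' where "l = v * w" "m = v * w'" "w^d = 1" "w'^d = 1"
      using lm roots_minus_one_eq [OF v] by (auto simp: set_eq_iff image_iff)
    then show ?thesis using roots_unity_pair_powers [OF assms(1-3), of w' w] unfolding L2 by metis
  qed
  ultimately show ?thesis unfolding Lfam_def coord_lines_def by (auto simp: L2)
qed

lemma lines_on_Fermat:
  assumes "d \<ge> 3" "L \<in> lines_on (Fermat d)"
  shows "L \<in> coord_lines 1 2 3 4 {z. z^d = 1} \<union> coord_lines 3 1 4 2 {z. z^d = 1}
           \<union> coord_lines 4 1 3 2 {z. z^d = -1}"
proof -
  define c :: "4 \<Rightarrow> complex" where "c j = (if j = 2 \<or> j = 3 then -1 else 1)" for j
  have c: "\<forall>j. c j \<noteq> 0" by (simp add: c_def)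
  have "\<forall>p\<in>L. (\<Sum>j\<in>UNIV. c j * (p$j)^d) = 0"
    using assms(2) by (auto simp: lines_on_def Fermat_def sum_4 c_def)
  moreover have "is_line L" using assms(2) by (simp add: lines_on_def)
  ultimately obtain j1 j2 j3 j4 where "distinct [j1, j2, j3, j4]" "paired_line c d j1 j2 j3 j4 L"
    using line_on_diagonal_surface_paired [OF assms(1) c] by blast
  then have "paired_line c d 1 2 3 4 L \<or> paired_line c d 3 1 4 2 L \<or> paired_line c d 4 1 3 2 L"
    using paired_line_canonical c \<open>d \<ge> 3\<close> by simp
  then show ?thesis
    by (auto simp: paired_line_def coord_lines_def c_def add_eq_0_iff eq_commute [of "-1 :: complex"])
qed

theorem corollary2p1:
  fixes d :: nat and \<eta> v :: complex
  assumes "d \<ge> 3"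
    and "\<eta> ^ d = 1" and "\<forall>m. 0 < m \<and> m < d \<longrightarrow> \<eta> ^ m \<noteq> 1"
    and "v ^ d = -1"
  shows "(\<forall>s \<in> {0, 1, 2}. sfrak (Lfam d \<eta> v s) = enat d)
         \<and> sfrak (lines_on (Fermat d)) \<le> enat (3 * d)"
proof -
  have "d > 0" using assms(1) by simp
  have roots_one: "finite {z :: complex. z^d = 1}" "card {z :: complex. z^d = 1} = d"
    using finite_roots_unity [where 'a = complex] card_roots_unity_eq [of d] \<open>d > 0\<close> by simp_all
  note roots_minus_one = finite_card_roots_minus_one [OF assms(4)]
  note fam = Lfam_0_eq [OF \<open>d > 0\<close> assms(2,3)] Lfam_1_eq [OF \<open>d > 0\<close> assms(2,3)]
    Lfam_2_eq [OF \<open>d > 0\<close> assms(2,3,4)]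
  have "sfrak (Lfam d \<eta> v 0) = enat d" "sfrak (Lfam d \<eta> v 1) = enat d" "sfrak (Lfam d \<eta> v 2) = enat d"
    unfolding fam using roots_one roots_minus_one by (simp_all add: sfrak_coord_lines)
  then have sfrak_fam: "\<forall>s \<in> {0, 1, 2}. sfrak (Lfam d \<eta> v s) = enat d" by auto
  have "sfrak (lines_on (Fermat d)) \<le> sfrak (Lfam d \<eta> v 0 \<union> Lfam d \<eta> v 1 \<union> Lfam d \<eta> v 2)"
    unfolding fam using lines_on_Fermat [OF assms(1)] by (intro sfrak_mono subsetI) blast
  also have "\<dots> \<le> sfrak (Lfam d \<eta> v 0) + sfrak (Lfam d \<eta> v 1) + sfrak (Lfam d \<eta> v 2)"
    by (meson add_right_mono order_trans sfrak_Un_le)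
  also have "\<dots> = enat (3 * d)" using sfrak_fam by (simp add: eval_nat_numeral)
  finally show ?thesis using sfrak_fam by blast
qed

end
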